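(* Let $h$ be a Hermitian $2\times2$ matrix with eigenvalues $\varepsilon_0<\varepsilon_1$, and set $H_A=H_B=h$. Let $\rho=(\rho_{ij})$ be a two-qubit density matrix (basis $|00\rangle,|01\rangle,|10\rangle,|11\rangle$). (i) Let $\mu_1\le\mu_2\le\mu_3\le\mu_4$ be the diagonal entries $\rho_{11},\dots,\rho_{44}$ in ascending order and let $P$ be a permutation matrix such that $P\rho P^\dagger$ has diagonal $(\mu_4,\mu_3,\mu_2,\mu_1)$. Then $Sub_{ic}(P\rho P^\dagger)\ge Sub_{ic}(\rho)$. (ii) Let $U$ be any $4\times4$ unitary, $\tilde\rho=U\rho U^\dagger$, let $\lambda_1^A,\lambda_1^B$ be the largest eigenvalues of $\rho_A,\rho_B$, and let $\xi_1^A,\xi_1^B$ be the largest eigenvalues of $\tilde\tau_A,\tilde\tau_B$, the reduced states of the dephased state $\tilde\tau=\mathrm{diag}(\tilde\rho_{11},\tilde\rho_{22},\tilde\rho_{33},\tilde\rho_{44})$ (equivalently, the largest diagonal entries of $\tilde\rho_A,\tilde\rho_B$). If $\xi_1^A+\xi_1^B>\lambda_1^A+\lambda_1^B$, then $Sub(\tilde\rho)>Sub(\rho)$.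
   Context: Quantum battery capacity: for Hermitian $H$ on $\mathbb{C}^d$ with eigenvalues $\epsilon_0\le\dots\le\epsilon_{d-1}$ and density matrix $\rho$ with eigenvalues $\lambda_0\le\dots\le\lambda_{d-1}$, $\mathcal{C}(\rho;H)=\sum_i\epsilon_i(\lambda_i-\lambda_{d-1-i})$. For a two-qubit state $\rho$ with reduced states $\rho_A,\rho_B$: $Sub(\rho)=\mathcal{C}(\rho_A;H_A)+\mathcal{C}(\rho_B;H_B)$; the dephased state is $\tau=\mathrm{diag}(\rho_{11},\rho_{22},\rho_{33},\rho_{44})$ in the computational basis, and $Sub_{ic}(\rho)=\mathcal{C}(\tau_A;H_A)+\mathcal{C}(\tau_B;H_B)$ where $\tau_A,\tau_B$ are the reduced states of $\tau$. *)

theory Defs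
  imports "Jordan_Normal_Form.Matrix" "Jordan_Normal_Form.Char_Poly"
    "HOL-Computational_Algebra.Fundamental_Theorem_Algebra"
    "HOL-Combinatorics.Permutations"
begin

definition adj :: "complex mat \<Rightarrow> complex mat" where
  "adj A = mat (dim_col A) (dim_row A) (\<lambda>(i,j). cnj (A $$ (j,i)))"

definition hermitian_mat :: "nat \<Rightarrow> complex mat \<Rightarrow> bool" where
  "hermitian_mat n A \<longleftrightarrow> A \<in> carrier_mat n n \<and> adj A = A"

definition unitary_mat :: "nat \<Rightarrow> complex mat \<Rightarrow> bool" where
  "unitary_mat n U \<longleftrightarrow> U \<in> carrier_mat n n \<and> adj U * U = 1\<^sub>m n \<and> U * adj U = 1\<^sub>m n"

definition density_mat :: "nat \<Rightarrow> complex mat \<Rightarrow> bool" where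
  "density_mat n A \<longleftrightarrow> hermitian_mat n A \<and>
     (\<forall>v \<in> carrier_vec n. Im (conjugate v \<bullet> (A *\<^sub>v v)) = 0 \<and> Re (conjugate v \<bullet> (A *\<^sub>v v)) \<ge> 0) \<and>
     (\<Sum>i<n. A $$ (i,i)) = 1"

definition eigs :: "complex mat \<Rightarrow> real list" where
  "eigs A = sorted_list_of_multiset (image_mset Re (proots (char_poly A)))"

definition capacity :: "complex mat \<Rightarrow> complex mat \<Rightarrow> real" where
  "capacity \<rho> H = (let d = dim_row \<rho>; \<epsilon> = eigs H; lam = eigs \<rho> in
     (\<Sum>i<d. \<epsilon> ! i * (lam ! i - lam ! (d - 1 - i))))"

(* two-qubit partial traces; basis index 2a+b for |ab>, a = qubit A *)
definition ptrace_B :: "complex mat \<Rightarrow> complex mat" where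
  "ptrace_B \<rho> = mat 2 2 (\<lambda>(i,j). \<Sum>k<2. \<rho> $$ (2*i+k, 2*j+k))"

definition ptrace_A :: "complex mat \<Rightarrow> complex mat" where
  "ptrace_A \<rho> = mat 2 2 (\<lambda>(i,j). \<Sum>k<2. \<rho> $$ (2*k+i, 2*k+j))"

(* rho_A = reduced state on A (trace out B), rho_B likewise *)
abbreviation red_A :: "complex mat \<Rightarrow> complex mat" where "red_A \<equiv> ptrace_B"
abbreviation red_B :: "complex mat \<Rightarrow> complex mat" where "red_B \<equiv> ptrace_A"

definition dephase :: "complex mat \<Rightarrow> complex mat" where
  "dephase \<rho> = mat (dim_row \<rho>) (dim_col \<rho>) (\<lambda>(i,j). if i = j then \<rho> $$ (i,i) else 0)"

definition Sub :: "complex mat \<Rightarrow> complex mat \<Rightarrow> complex mat \<Rightarrow> real" where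
  "Sub HA HB \<rho> = capacity (red_A \<rho>) HA + capacity (red_B \<rho>) HB"

definition Sub_ic :: "complex mat \<Rightarrow> complex mat \<Rightarrow> complex mat \<Rightarrow> real" where
  "Sub_ic HA HB \<rho> = capacity (red_A (dephase \<rho>)) HA + capacity (red_B (dephase \<rho>)) HB"

definition perm_mat :: "nat \<Rightarrow> (nat \<Rightarrow> nat) \<Rightarrow> complex mat" where
  "perm_mat n \<sigma> = mat n n (\<lambda>(i,j). if i = \<sigma> j then 1 else 0)"

definition diag_list :: "complex mat \<Rightarrow> real list" where
  "diag_list \<rho> = map (\<lambda>i. Re (\<rho> $$ (i,i))) [0..<dim_row \<rho>]"

end

theory Submission
  imports Defs
begin

(* For a qubit Hamiltonian with gap g = eps_1 - eps_0, the capacity of a 2x2 state is g times its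
   eigenvalue splitting, which for a Hermitian matrix of trace t is 2 lambda_max - t; moreover
   lambda_max dominates both diagonal entries and equals the larger one for a diagonal matrix.
   Hence Sub(rho) = 2 g (lambda_max(rho_A) + lambda_max(rho_B) - tr rho), and since dephasing can
   only lower the local lambda_max, a unitary that raises the dephased local maxima above those of
   rho raises Sub.  For the dephased state, |u + v| + |u - v| = 2 max |u| |v| turns Sub_ic into
   2 g max(|p_00 - p_11|, |p_01 - p_10|) in terms of the populations p, which is at most
   2 g (max p - min p), with equality for the descending arrangement. *)

lemma det_2x2:
  assumes "A \<in> carrier_mat 2 2"
  shows "det A = A $$ (0,0) * A $$ (1,1) - A $$ (0,1) * A $$ (1,0)"
proof -
  have det_1x1: "det B = B $$ (0,0)" if "B \<in> carrier_mat 1 1" for B :: "'a mat"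
    using that by (simp add: det_def')
  show ?thesis
    using assms by (simp add: laplace_expansion_column[OF assms, of 0] cofactor_def numeral_2_eq_2
        lessThan_Suc det_1x1 mat_delete_carrier mat_delete_def)
qed

lemma eigs_2x2:
  assumes A: "A \<in> carrier_mat 2 2"
    and "x + y = A $$ (0,0) + A $$ (1,1)"
    and "x * y = A $$ (0,0) * A $$ (1,1) - A $$ (0,1) * A $$ (1,0)"
  shows "eigs A = sort [Re x, Re y]"
proof -
  have cpm: "char_poly_matrix A \<in> carrier_mat 2 2"
    using A by simp
  have "char_poly A = [:-x, 1:] * [:-y, 1:]"
    unfolding char_poly_def det_2x2[OF cpm] using A assms(2,3)
    by (simp add: char_poly_matrix_def algebra_simps)
  moreover have "proots ([:-x, 1:] * [:-y, 1:]) = {#x, y#}"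
    by (subst proots_mult) auto
  ultimately have "proots (char_poly A) = {#x, y#}"
    by simp
  then show ?thesis
    unfolding eigs_def by simp
qed

abbreviation energy_gap :: "complex mat \<Rightarrow> real" where
  "energy_gap H \<equiv> eigs H ! 1 - eigs H ! 0"

lemma capacity_2x2:
  assumes "dim_row A = 2"
  shows "capacity A H = energy_gap H * (eigs A ! 1 - eigs A ! 0)"
  using assms unfolding capacity_def Let_def
  by (simp add: numeral_2_eq_2 lessThan_Suc algebra_simps)

lemma hermitian_mat_entry:
  assumes "hermitian_mat n A" "i < n" "j < n"
  shows "A $$ (i,j) = cnj (A $$ (j,i))"
proof -
  have A: "A \<in> carrier_mat n n" "adj A = A"
    using assms(1) unfolding hermitian_mat_def by auto
  have "A $$ (i,j) = adj A $$ (i,j)"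
    using A(2) by simp
  also have "\<dots> = cnj (A $$ (j,i))"
    using A(1) assms(2,3) by (simp add: adj_def)
  finally show ?thesis .
qed

lemma hermitian_mat_diag_real:
  assumes "hermitian_mat n A" "i < n"
  shows "A $$ (i,i) = complex_of_real (Re (A $$ (i,i)))"
  using hermitian_mat_entry[OF assms assms(2)] by (simp add: complex_eq_iff)

lemma eigs_hermitian_2x2:
  assumes A: "hermitian_mat 2 A"
  defines "a \<equiv> Re (A $$ (0,0))" and "d \<equiv> Re (A $$ (1,1))" and "b \<equiv> cmod (A $$ (0,1))"
  shows "eigs A = [(a + d - sqrt ((a - d)\<^sup>2 + 4 * b\<^sup>2)) / 2, (a + d + sqrt ((a - d)\<^sup>2 + 4 * b\<^sup>2)) / 2]"
proof -
  define s where "s = sqrt ((a - d)\<^sup>2 + 4 * b\<^sup>2)"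
  have s_nonneg: "s \<ge> 0"
    unfolding s_def by simp
  have "s\<^sup>2 = (a - d)\<^sup>2 + 4 * b\<^sup>2"
    unfolding s_def by simp
  then have prod: "((a + d - s) / 2) * ((a + d + s) / 2) = a * d - b\<^sup>2"
    by (simp add: field_simps power2_eq_square)
  have A00: "A $$ (0,0) = complex_of_real a"
    using hermitian_mat_diag_real[OF A, of 0] unfolding a_def by simp
  have A11: "A $$ (1,1) = complex_of_real d"
    using hermitian_mat_diag_real[OF A, of 1] unfolding d_def by simp
  have A01: "A $$ (0,1) * A $$ (1,0) = complex_of_real (b\<^sup>2)"
    using hermitian_mat_entry[OF A, of 1 0] unfolding b_def by (simp add: complex_norm_square[symmetric])
  have char_prod: "complex_of_real ((a + d - s) / 2) * complex_of_real ((a + d + s) / 2)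
      = A $$ (0,0) * A $$ (1,1) - A $$ (0,1) * A $$ (1,0)"
    unfolding A00 A11 A01 using prod by (metis of_real_diff of_real_mult)
  have char_sum: "complex_of_real ((a + d - s) / 2) + complex_of_real ((a + d + s) / 2)
      = A $$ (0,0) + A $$ (1,1)"
    unfolding A00 A11 by (simp add: field_simps)
  have "A \<in> carrier_mat 2 2"
    using A unfolding hermitian_mat_def by auto
  from eigs_2x2[OF this char_sum char_prod]
  have "eigs A = sort [(a + d - s) / 2, (a + d + s) / 2]"
    by simp
  then show ?thesis
    using s_nonneg unfolding s_def by simp
qed

lemma capacity_hermitian_2x2:
  assumes "hermitian_mat 2 A"
  shows "capacity A H = energy_gap H * (2 * last (eigs A) - Re (A $$ (0,0)) - Re (A $$ (1,1)))"
proof -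
  have "dim_row A = 2"
    using assms unfolding hermitian_mat_def by auto
  then show ?thesis
    by (simp add: capacity_2x2 eigs_hermitian_2x2[OF assms] field_simps)
qed

lemma diag_le_last_eigs_hermitian_2x2:
  assumes "hermitian_mat 2 A" "i < 2"
  shows "Re (A $$ (i,i)) \<le> last (eigs A)"
proof -
  let ?a = "Re (A $$ (0,0))" and ?d = "Re (A $$ (1,1))"
  have "\<bar>?a - ?d\<bar> = sqrt ((?a - ?d)\<^sup>2)"
    by simp
  also have "\<dots> \<le> sqrt ((?a - ?d)\<^sup>2 + 4 * (cmod (A $$ (0,1)))\<^sup>2)"
    by (rule real_sqrt_le_mono) simp
  finally have "\<bar>?a - ?d\<bar> \<le> sqrt ((?a - ?d)\<^sup>2 + 4 * (cmod (A $$ (0,1)))\<^sup>2)" .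
  then show ?thesis
    using assms(2) by (auto simp: eigs_hermitian_2x2[OF assms(1)] less_2_cases_iff)
qed

lemma eigs_dephase_2x2:
  assumes "A \<in> carrier_mat 2 2"
  shows "eigs (dephase A) = sort [Re (A $$ (0,0)), Re (A $$ (1,1))]"
  by (rule eigs_2x2) (use assms in \<open>auto simp: dephase_def\<close>)

lemma capacity_dephase_2x2:
  assumes "A \<in> carrier_mat 2 2"
  shows "capacity (dephase A) H = energy_gap H * \<bar>Re (A $$ (0,0)) - Re (A $$ (1,1))\<bar>"
proof -
  have "dim_row (dephase A) = 2"
    using assms by (simp add: dephase_def)
  then show ?thesis
    using assms by (simp add: capacity_2x2 eigs_dephase_2x2)
qed

lemma last_eigs_dephase_le_2x2:
  assumes "hermitian_mat 2 A"
  shows "last (eigs (dephase A)) \<le> last (eigs A)"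
  using assms diag_le_last_eigs_hermitian_2x2[OF assms, of 0] diag_le_last_eigs_hermitian_2x2[OF assms, of 1]
  by (simp add: eigs_dephase_2x2 hermitian_mat_def)

lemma adj_carrier_mat [simp]: "A \<in> carrier_mat n m \<Longrightarrow> adj A \<in> carrier_mat m n"
  unfolding adj_def by auto

lemma adj_adj [simp]: "adj (adj A) = A"
  unfolding adj_def by (auto intro!: eq_matI)

lemma adj_mult:
  assumes "A \<in> carrier_mat n m" "B \<in> carrier_mat m k"
  shows "adj (A * B) = adj B * adj A"
  using assms unfolding adj_def
  by (auto intro!: eq_matI sum.cong simp: scalar_prod_def mult.commute)

lemma mult_mult_adj_carrier_mat:
  "U \<in> carrier_mat n n \<Longrightarrow> A \<in> carrier_mat n n \<Longrightarrow> U * A * adj U \<in> carrier_mat n n"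
  by (meson adj_carrier_mat mult_carrier_mat)

lemma hermitian_mat_conj:
  assumes "hermitian_mat n A" "U \<in> carrier_mat n n"
  shows "hermitian_mat n (U * A * adj U)"
proof -
  have A: "A \<in> carrier_mat n n" "adj A = A"
    using assms(1) unfolding hermitian_mat_def by auto
  have "adj (U * A * adj U) = adj (adj U) * adj (U * A)"
    using A assms(2) by (intro adj_mult[of _ n n _ n]) auto
  also have "\<dots> = U * (A * adj U)"
    using adj_mult[of U n n A n] A assms(2) by simp
  also have "\<dots> = U * A * adj U"
    using A assms(2) by (simp add: assoc_mult_mat[of _ n n _ n _ n])
  moreover have "U * A * adj U \<in> carrier_mat n n"
    using assms(2) A(1) by (rule mult_mult_adj_carrier_mat)
  ultimately show ?thesis
    unfolding hermitian_mat_def by simp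
qed

definition trace :: "'a::comm_ring mat \<Rightarrow> 'a" where
  "trace A = (\<Sum>i<dim_row A. A $$ (i,i))"

lemma trace_mult_comm:
  assumes "A \<in> carrier_mat n m" "B \<in> carrier_mat m n"
  shows "trace (A * B) = trace (B * A)"
proof -
  have "trace (A * B) = (\<Sum>i<n. \<Sum>j<m. A $$ (i,j) * B $$ (j,i))"
    using assms by (simp add: trace_def scalar_prod_def atLeast0LessThan)
  also have "\<dots> = (\<Sum>j<m. \<Sum>i<n. B $$ (j,i) * A $$ (i,j))"
    by (subst sum.swap) (simp add: mult.commute)
  also have "\<dots> = trace (B * A)"
    using assms by (simp add: trace_def scalar_prod_def atLeast0LessThan)
  finally show ?thesis .
qed

lemma trace_unitary_conj:
  assumes "unitary_mat n U" "A \<in> carrier_mat n n"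
  shows "trace (U * A * adj U) = trace A"
proof -
  have U: "U \<in> carrier_mat n n" "adj U * U = 1\<^sub>m n"
    using assms(1) unfolding unitary_mat_def by auto
  have "trace (U * A * adj U) = trace (adj U * (U * A))"
    using U assms(2) by (intro trace_mult_comm[of _ n n]) auto
  also have "\<dots> = trace ((adj U * U) * A)"
    using U(1) assms(2) by (simp add: assoc_mult_mat[of _ n n _ n _ n])
  finally show ?thesis
    using U assms(2) by simp
qed

lemma red_A_carrier_mat [simp]: "red_A M \<in> carrier_mat 2 2"
  unfolding ptrace_B_def by simp

lemma red_B_carrier_mat [simp]: "red_B M \<in> carrier_mat 2 2"
  unfolding ptrace_A_def by simp

lemma hermitian_mat_red_A:
  assumes "hermitian_mat 4 M"
  shows "hermitian_mat 2 (red_A M)"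
proof -
  have "adj (red_A M) $$ (i,j) = red_A M $$ (i,j)" if "i < 2" "j < 2" for i j
    using that hermitian_mat_entry[OF assms, of "2 * i + k" "2 * j + k" for k]
    by (simp add: adj_def ptrace_B_def)
  then show ?thesis
    unfolding hermitian_mat_def by (auto intro!: eq_matI simp: adj_def ptrace_B_def)
qed

lemma hermitian_mat_red_B:
  assumes "hermitian_mat 4 M"
  shows "hermitian_mat 2 (red_B M)"
proof -
  have "adj (red_B M) $$ (i,j) = red_B M $$ (i,j)" if "i < 2" "j < 2" for i j
    using that hermitian_mat_entry[OF assms, of "2 * k + i" "2 * k + j" for k]
    by (simp add: adj_def ptrace_A_def)
  then show ?thesis
    unfolding hermitian_mat_def by (auto intro!: eq_matI simp: adj_def ptrace_A_def)
qed

lemma red_A_dephase: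
  assumes "M \<in> carrier_mat 4 4"
  shows "red_A (dephase M) = dephase (red_A M)"
  using assms by (auto intro!: eq_matI simp: ptrace_B_def dephase_def)

lemma red_B_dephase:
  assumes "M \<in> carrier_mat 4 4"
  shows "red_B (dephase M) = dephase (red_B M)"
  using assms by (auto intro!: eq_matI simp: ptrace_A_def dephase_def)

lemma red_A_diag:
  "red_A M $$ (0,0) = M $$ (0,0) + M $$ (1,1)"
  "red_A M $$ (1,1) = M $$ (2,2) + M $$ (3,3)"
  by (simp_all add: ptrace_B_def numeral_2_eq_2 numeral_3_eq_3 lessThan_Suc)

lemma red_B_diag:
  "red_B M $$ (0,0) = M $$ (0,0) + M $$ (2,2)"
  "red_B M $$ (1,1) = M $$ (1,1) + M $$ (3,3)"
  by (simp_all add: ptrace_A_def numeral_2_eq_2 numeral_3_eq_3 lessThan_Suc)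

lemma trace_4x4:
  assumes "M \<in> carrier_mat 4 4"
  shows "trace M = M $$ (0,0) + M $$ (1,1) + M $$ (2,2) + M $$ (3,3)"
  using assms by (simp add: trace_def lessThan_nat_numeral)

lemma Sub_eq_last_eigs:
  assumes "hermitian_mat 4 M"
  shows "Sub H H M = 2 * energy_gap H * (last (eigs (red_A M)) + last (eigs (red_B M)) - Re (trace M))"
proof -
  have M: "M \<in> carrier_mat 4 4"
    using assms unfolding hermitian_mat_def by auto
  show ?thesis
    unfolding Sub_def capacity_hermitian_2x2[OF hermitian_mat_red_A[OF assms]]
      capacity_hermitian_2x2[OF hermitian_mat_red_B[OF assms]] red_A_diag red_B_diag trace_4x4[OF M]
    by (simp add: algebra_simps)
qed

lemma diag_list_4x4:
  assumes "M \<in> carrier_mat 4 4"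
  shows "diag_list M = [Re (M $$ (0,0)), Re (M $$ (1,1)), Re (M $$ (2,2)), Re (M $$ (3,3))]"
  using assms by (simp add: diag_list_def upt_rec numeral_2_eq_2 numeral_3_eq_3)

lemma abs_add_plus_abs_diff:
  fixes u v :: "'a::linordered_idom"
  shows "\<bar>u + v\<bar> + \<bar>u - v\<bar> = 2 * max \<bar>u\<bar> \<bar>v\<bar>"
  by (auto simp: abs_if max_def)

(* p lists the populations of |00>, |01>, |10>, |11> (index 2a + b for |ab>) *)
definition imbalance :: "real list \<Rightarrow> real" where
  "imbalance p = max \<bar>p ! 0 - p ! 3\<bar> \<bar>p ! 1 - p ! 2\<bar>"

lemma Sub_ic_eq_imbalance:
  assumes M: "M \<in> carrier_mat 4 4"
  shows "Sub_ic H H M = 2 * energy_gap H * imbalance (diag_list M)"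
proof -
  let ?p = "\<lambda>i. Re (M $$ (i,i))"
  have "Sub_ic H H M = energy_gap H * (\<bar>(?p 0 - ?p 3) + (?p 1 - ?p 2)\<bar> + \<bar>(?p 0 - ?p 3) - (?p 1 - ?p 2)\<bar>)"
    unfolding Sub_ic_def red_A_dephase[OF M] red_B_dephase[OF M]
      capacity_dephase_2x2[OF red_A_carrier_mat] capacity_dephase_2x2[OF red_B_carrier_mat]
      red_A_diag red_B_diag
    by (simp add: algebra_simps)
  then show ?thesis
    unfolding abs_add_plus_abs_diff imbalance_def diag_list_4x4[OF M] by simp
qed

lemma imbalance_le_rev_sort:
  assumes "length p = 4"
  shows "imbalance p \<le> imbalance (rev (sort p))"
proof -
  have "\<exists>a b c d. xs = [a, b, c, d]" if "length xs = 4" for xs :: "real list"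
    using that by (auto simp: numeral_eq_Suc length_Suc_conv)
  then obtain a b c d where abcd: "sort p = [a, b, c, d]"
    using assms by (metis length_sort)
  have "a \<le> b" "b \<le> c" "c \<le> d"
    using sorted_sort[of p] unfolding abcd by auto
  moreover have "p ! i \<in> {a, b, c, d}" if "i < 4" for i
    using that assms set_sort[of "\<lambda>x. x" p] unfolding abcd by (metis list.set nth_mem)
  ultimately have bounds: "a \<le> p ! i \<and> p ! i \<le> d" if "i < 4" for i
    using that by fastforce
  have "imbalance p \<le> d - a"
    using bounds[of 0] bounds[of 1] bounds[of 2] bounds[of 3] by (simp add: imbalance_def abs_le_iff)
  also have "d - a \<le> imbalance (rev (sort p))"
    unfolding imbalance_def abcd by (simp add: numeral_2_eq_2 numeral_3_eq_3)
  finally show ?thesis .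
qed

lemma Sub_ic_le_of_diag_descending:
  assumes "M \<in> carrier_mat 4 4" "\<rho> \<in> carrier_mat 4 4" "energy_gap H \<ge> 0"
    and "diag_list M = rev (sort (diag_list \<rho>))"
  shows "Sub_ic H H \<rho> \<le> Sub_ic H H M"
proof -
  have "length (diag_list \<rho>) = 4"
    using assms(2) by (simp add: diag_list_def)
  then show ?thesis
    unfolding Sub_ic_eq_imbalance[OF assms(1)] Sub_ic_eq_imbalance[OF assms(2)] assms(4)
    using assms(3) by (simp add: imbalance_le_rev_sort mult_left_mono)
qed

lemma Sub_less_of_dephased_gain:
  assumes "hermitian_mat 4 \<rho>" "hermitian_mat 4 \<rho>'" "trace \<rho>' = trace \<rho>" "energy_gap H > 0"
    and "last (eigs (red_A (dephase \<rho>'))) + last (eigs (red_B (dephase \<rho>')))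
      > last (eigs (red_A \<rho>)) + last (eigs (red_B \<rho>))"
  shows "Sub H H \<rho> < Sub H H \<rho>'"
proof -
  have "\<rho>' \<in> carrier_mat 4 4"
    using assms(2) unfolding hermitian_mat_def by auto
  then have "last (eigs (red_A (dephase \<rho>'))) \<le> last (eigs (red_A \<rho>'))"
    and "last (eigs (red_B (dephase \<rho>'))) \<le> last (eigs (red_B \<rho>'))"
    using last_eigs_dephase_le_2x2 hermitian_mat_red_A[OF assms(2)] hermitian_mat_red_B[OF assms(2)]
    by (simp_all add: red_A_dephase red_B_dephase)
  then show ?thesis
    unfolding Sub_eq_last_eigs[OF assms(1)] Sub_eq_last_eigs[OF assms(2)] assms(3)
    using assms(4,5) by simp
qed

theorem theorem2:
  fixes h \<rho> :: "complex mat"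
  assumes h: "hermitian_mat 2 h"
    and eps: "eigs h ! 0 < eigs h ! 1"
    and rho: "density_mat 4 \<rho>"
  shows "(\<forall>\<sigma>. \<sigma> permutes {..<4} \<longrightarrow>
            diag_list (perm_mat 4 \<sigma> * \<rho> * adj (perm_mat 4 \<sigma>)) = rev (sort (diag_list \<rho>)) \<longrightarrow>
            Sub_ic h h (perm_mat 4 \<sigma> * \<rho> * adj (perm_mat 4 \<sigma>)) \<ge> Sub_ic h h \<rho>)
       \<and> (\<forall>U. unitary_mat 4 U \<longrightarrow>
            (let \<rho>' = U * \<rho> * adj U in
              last (eigs (red_A (dephase \<rho>'))) + last (eigs (red_B (dephase \<rho>')))
                > last (eigs (red_A \<rho>)) + last (eigs (red_B \<rho>))
              \<longrightarrow> Sub h h \<rho>' > Sub h h \<rho>))"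
proof -
  have herm: "hermitian_mat 4 \<rho>" and carrier: "\<rho> \<in> carrier_mat 4 4"
    using rho unfolding density_mat_def hermitian_mat_def by auto
  have gap: "energy_gap h > 0"
    using eps by simp
  show ?thesis
  proof (intro conjI allI impI)
    (* only the diagonal of the rearranged state matters, not that it comes from a permutation *)
    fix \<sigma> :: "nat \<Rightarrow> nat"
    assume "diag_list (perm_mat 4 \<sigma> * \<rho> * adj (perm_mat 4 \<sigma>)) = rev (sort (diag_list \<rho>))"
    moreover have "perm_mat 4 \<sigma> * \<rho> * adj (perm_mat 4 \<sigma>) \<in> carrier_mat 4 4"
      using carrier by (simp add: mult_mult_adj_carrier_mat perm_mat_def)
    ultimately show "Sub_ic h h (perm_mat 4 \<sigma> * \<rho> * adj (perm_mat 4 \<sigma>)) \<ge> Sub_ic h h \<rho>"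
      using Sub_ic_le_of_diag_descending carrier gap by simp
  next
    fix U assume U: "unitary_mat 4 U"
    then have "hermitian_mat 4 (U * \<rho> * adj U)"
      using herm by (simp add: hermitian_mat_conj unitary_mat_def)
    moreover have "trace (U * \<rho> * adj U) = trace \<rho>"
      using U carrier by (rule trace_unitary_conj)
    ultimately show "let \<rho>' = U * \<rho> * adj U in
        last (eigs (red_A (dephase \<rho>'))) + last (eigs (red_B (dephase \<rho>')))
          > last (eigs (red_A \<rho>)) + last (eigs (red_B \<rho>)) \<longrightarrow> Sub h h \<rho>' > Sub h h \<rho>"
      unfolding Let_def using Sub_less_of_dephased_gain[OF herm] gap by simp
  qed
qed

end
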